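(* For any nonzero proper homogeneous ideal $I$ of a standard graded polynomial ring $A$ over a field, $$\min_{i \ge 1} \operatorname{depth} A/I^i = \min_{i \ge 1} \operatorname{depth} I^{i-1}/I^i.$$
   Context: Convention: $I^0=A$. Depth of a finitely generated graded module is $\min\{i: H^i_{\mathfrak m}(M)\neq0\}$ for the maximal homogeneous ideal $\mathfrak m$ of $A$. *)

theory Defs
  imports "HOL-Library.Poly_Mapping" "HOL-Library.Extended_Nat"
begin

text \<open>The standard graded polynomial ring A = k[X_v | v in 'v] over a field k, with a finite
  linearly ordered type 'v of variables, is the type mpoly below
  (monomials = exponent vectors, polynomials = finitely supported coefficient functions).\<close>

type_synonym ('v, 'k) mpoly = "('v \<Rightarrow>\<^sub>0 nat) \<Rightarrow>\<^sub>0 'k"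

definition Var :: "'v \<Rightarrow> ('v, 'k::comm_ring_1) mpoly" where
  "Var v = Poly_Mapping.single (Poly_Mapping.single v 1) 1"

definition mon_deg :: "('v::finite \<Rightarrow>\<^sub>0 nat) \<Rightarrow> nat" where
  "mon_deg m = (\<Sum>v\<in>UNIV. Poly_Mapping.lookup m v)"

definition hcomp :: "nat \<Rightarrow> ('v::finite, 'k::comm_ring_1) mpoly \<Rightarrow> ('v, 'k) mpoly" where
  "hcomp d f = Abs_poly_mapping (\<lambda>m. if mon_deg m = d then Poly_Mapping.lookup f m else 0)"

definition is_ideal :: "'a::comm_ring_1 set \<Rightarrow> bool" where
  "is_ideal I \<longleftrightarrow> 0 \<in> I \<and> (\<forall>x\<in>I. \<forall>y\<in>I. x + y \<in> I) \<and> (\<forall>a. \<forall>x\<in>I. a * x \<in> I)"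

definition homogeneous_ideal :: "('v::finite, 'k::comm_ring_1) mpoly set \<Rightarrow> bool" where
  "homogeneous_ideal I \<longleftrightarrow> is_ideal I \<and> (\<forall>f\<in>I. \<forall>d. hcomp d f \<in> I)"

definition ideal_gen :: "'a::comm_ring_1 set \<Rightarrow> 'a set" where
  "ideal_gen X = \<Inter>{J. is_ideal J \<and> X \<subseteq> J}"

fun ideal_pow :: "'a::comm_ring_1 set \<Rightarrow> nat \<Rightarrow> 'a set" where
  "ideal_pow I 0 = UNIV"
| "ideal_pow I (Suc i) = ideal_gen {a * b |a b. a \<in> ideal_pow I i \<and> b \<in> I}"

text \<open>Local cohomology H^i_m(M) of the A-module M = N/N' (N' \<subseteq> N ideals), with m = (X_v | v),
  computed by the Cech complex on the variables:
  C^i = \<Oplus>_{|S| = i} M_{x_S}, x_S = \<Prod>_{v\<in>S} X_v, with the usual alternating differential.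
  A cochain is represented with a common exponent k as S \<mapsto> a S / x_S^k (a S \<in> N);
  an element a / x_T^k of M_{x_T} is zero iff x_T^t a \<in> N' for some t.\<close>

definition xS :: "'v set \<Rightarrow> ('v, 'k::comm_ring_1) mpoly" where
  "xS S = (\<Prod>v\<in>S. Var v)"

definition csgn :: "'v::linorder \<Rightarrow> 'v set \<Rightarrow> ('v, 'k::comm_ring_1) mpoly" where
  "csgn v T = (-1) ^ card {w\<in>T. w < v}"

text \<open>Numerator (over x_T^k) of the Cech differential of the cochain S \<mapsto> a S / x_S^k at T.\<close>
definition cech_d :: "('v::{finite,linorder} set \<Rightarrow> ('v, 'k::comm_ring_1) mpoly) \<Rightarrow> nat \<Rightarrow> 'v set
    \<Rightarrow> ('v, 'k) mpoly" where
  "cech_d a k T = (\<Sum>v\<in>T. csgn v T * Var v ^ k * a (T - {v}))"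

definition loc_zero :: "('v, 'k::comm_ring_1) mpoly set \<Rightarrow> 'v set \<Rightarrow> ('v, 'k) mpoly \<Rightarrow> bool" where
  "loc_zero N' T f \<longleftrightarrow> (\<exists>t. xS T ^ t * f \<in> N')"

definition local_cohom_nonzero ::
  "nat \<Rightarrow> ('v::{finite,linorder}, 'k::comm_ring_1) mpoly set \<Rightarrow> ('v, 'k) mpoly set \<Rightarrow> bool" where
  "local_cohom_nonzero i N N' \<longleftrightarrow>
     (\<exists>a k. (\<forall>S. card S = i \<longrightarrow> a S \<in> N)
        \<comment> \<open>cocycle\<close>
        \<and> (\<forall>T. card T = Suc i \<longrightarrow> loc_zero N' T (cech_d a k T))
        \<comment> \<open>not a coboundary\<close>
        \<and> \<not> (\<exists>b l. (\<forall>S. card S + 1 = i \<longrightarrow> b S \<in> N) \<and>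
               (\<forall>S. card S = i \<longrightarrow>
                   loc_zero N' S (xS S ^ l * a S - xS S ^ k * cech_d b l S))))"

definition depth_quot :: "('v::{finite,linorder}, 'k::comm_ring_1) mpoly set \<Rightarrow> ('v, 'k) mpoly set \<Rightarrow> enat" where
  "depth_quot N N' = (if \<exists>i. local_cohom_nonzero i N N'
                      then enat (LEAST i. local_cohom_nonzero i N N') else \<infinity>)"

end

theory Submission
  imports Defs
begin

text \<open>Let \<open>M i = depth (A/I^i)\<close> and \<open>K i = depth (I^(i-1)/I^i)\<close>. The short exact sequences
  \<open>0 \<rightarrow> I^(i-1)/I^i \<rightarrow> A/I^i \<rightarrow> A/I^(i-1) \<rightarrow> 0\<close> give, via the long exact sequence of local
  cohomology, \<open>M i \<ge> min (K i) (M (i-1))\<close> and \<open>K i \<ge> min (M i) (M (i-1) + 1)\<close>. Since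
  \<open>M 0 = \<infinity>\<close>, induction on the first inequality bounds every \<open>M i\<close> below by \<open>min K\<close>, and the
  second bounds every \<open>K i\<close> below by \<open>min M\<close>.\<close>

lemma is_ideal_mult_left: "is_ideal J \<Longrightarrow> x \<in> J \<Longrightarrow> y * x \<in> J"
  by (simp add: is_ideal_def)

lemma is_ideal_add: "is_ideal J \<Longrightarrow> x \<in> J \<Longrightarrow> y \<in> J \<Longrightarrow> x + y \<in> J"
  by (simp add: is_ideal_def)

lemma is_ideal_diff:
  assumes "is_ideal J" "x \<in> J" "y \<in> J"
  shows "x - y \<in> J"
proof -
  have "x + (-1) * y \<in> J"
    using assms is_ideal_add is_ideal_mult_left by blast
  then show ?thesis by simp
qed

lemma is_ideal_ideal_pow: "is_ideal (ideal_pow I i)"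
  by (cases i) (simp_all add: is_ideal_def ideal_gen_def)

lemma ideal_pow_Suc_subset: "ideal_pow I (Suc i) \<subseteq> ideal_pow I i"
proof -
  have "{a * b |a b. a \<in> ideal_pow I i \<and> b \<in> I} \<subseteq> ideal_pow I i"
    using is_ideal_ideal_pow is_ideal_mult_left by (fastforce simp: mult.commute)
  then show ?thesis
    using is_ideal_ideal_pow[of I i] by (auto simp: ideal_gen_def)
qed

lemma loc_zero_mono: "N1 \<subseteq> N2 \<Longrightarrow> loc_zero N1 T f \<Longrightarrow> loc_zero N2 T f"
  unfolding loc_zero_def by blast

lemma loc_zero_mult:
  assumes "is_ideal N" "loc_zero N T f"
  shows "loc_zero N T (g * f)"
proof -
  obtain t where "xS T ^ t * f \<in> N"
    using assms(2) unfolding loc_zero_def by blast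
  then have "xS T ^ t * (g * f) \<in> N"
    using is_ideal_mult_left[OF assms(1)] by (metis mult.left_commute)
  then show ?thesis unfolding loc_zero_def by blast
qed

lemma loc_zero_xS_power_multD: "loc_zero N T (xS T ^ m * f) \<Longrightarrow> loc_zero N T f"
  unfolding loc_zero_def by (metis mult.assoc power_add)

lemma loc_zero_common_exponent:
  fixes f :: "'v::finite set \<Rightarrow> ('v, 'k::comm_ring_1) mpoly"
  assumes J: "is_ideal J" and zero: "\<forall>S. P S \<longrightarrow> loc_zero J S (f S)"
  shows "\<exists>t. \<forall>S. P S \<longrightarrow> xS S ^ t * f S \<in> J"
proof -
  obtain tf where tf: "\<forall>S. P S \<longrightarrow> xS S ^ tf S * f S \<in> J"
    using zero unfolding loc_zero_def by metis
  define t where "t = Max (tf ` {S. P S})"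
  have "xS S ^ t * f S \<in> J" if "P S" for S
  proof -
    have "tf S \<le> t" using that unfolding t_def by (simp add: Max_ge)
    moreover have "xS S ^ (t - tf S) * (xS S ^ tf S * f S) \<in> J"
      using tf that is_ideal_mult_left[OF J] by blast
    ultimately show ?thesis
      by (metis le_add_diff_inverse2 mult.assoc power_add)
  qed
  then show ?thesis by blast
qed

lemma xS_remove: "v \<in> T \<Longrightarrow> (xS T :: ('v::finite, 'k::comm_ring_1) mpoly) = Var v * xS (T - {v})"
  unfolding xS_def by (simp add: prod.remove)

lemma cech_d_diff: "cech_d (\<lambda>S. f S - g S) k T = cech_d f k T - cech_d g k T"
  unfolding cech_d_def by (simp add: sum_subtractf algebra_simps)

lemma cech_d_add: "cech_d (\<lambda>S. f S + g S) k T = cech_d f k T + cech_d g k T"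
  unfolding cech_d_def by (simp add: sum.distrib algebra_simps)

text \<open>Rewriting \<open>b S / x_S^l\<close> with the larger exponent \<open>l + m\<close>.\<close>
lemma cech_d_xS_power_mult:
  "cech_d (\<lambda>S. xS S ^ m * b S) (l + m) T = xS T ^ m * cech_d b l T"
  unfolding cech_d_def sum_distrib_left
proof (rule sum.cong)
  fix v assume v: "v \<in> T"
  show "csgn v T * Var v ^ (l + m) * (xS (T - {v}) ^ m * b (T - {v})) =
        xS T ^ m * (csgn v T * Var v ^ l * b (T - {v}))"
    by (simp add: xS_remove[OF v] power_mult_distrib power_add algebra_simps)
qed simp

lemma csgn_swap:
  fixes T :: "'v::{finite,linorder} set"
  assumes "v \<in> T" "w \<in> T" "v < w"
  shows "(csgn v T * csgn w (T - {v}) :: ('v, 'k::comm_ring_1) mpoly)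
       = - (csgn w T * csgn v (T - {w}))"
proof -
  have below_v: "{u\<in>T - {w}. u < v} = {u\<in>T. u < v}" using assms by auto
  have v: "v \<in> {u\<in>T. u < w}" using assms by auto
  then obtain n where n: "card {u\<in>T. u < w} = Suc n"
    by (metis card_gt_0_iff empty_iff finite gr0_implies_Suc)
  moreover have "{u\<in>T - {v}. u < w} = {u\<in>T. u < w} - {v}" by auto
  ultimately have "card {u\<in>T - {v}. u < w} = n"
    using n v by (simp add: card_Diff_singleton)
  then show ?thesis unfolding csgn_def below_v n by simp
qed

lemma cech_d_cech_d: "cech_d (\<lambda>S. cech_d c l S) l T = 0"
proof -
  define f where
    "f v w = csgn v T * Var v ^ l * (csgn w (T - {v}) * Var w ^ l * c (T - {v} - {w}))" for v w
  define P where "P = Sigma T (\<lambda>v. T - {v})"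
  have antisym: "f w v = - f v w" if "(v, w) \<in> P" "v < w" for v w
  proof -
    have "T - {w} - {v} = T - {v} - {w}" by auto
    then have "f w v = (csgn w T * csgn v (T - {w})) * (Var v ^ l * Var w ^ l * c (T - {v} - {w}))"
      unfolding f_def by (simp add: algebra_simps)
    also have "\<dots> = - (csgn v T * csgn w (T - {v})) * (Var v ^ l * Var w ^ l * c (T - {v} - {w}))"
      using that by (subst csgn_swap) (auto simp: P_def)
    also have "\<dots> = - f v w"
      unfolding f_def by (simp add: algebra_simps)
    finally show ?thesis .
  qed
  have split: "P = {p\<in>P. fst p < snd p} \<union> {p\<in>P. snd p < fst p}"
    unfolding P_def by (auto simp: neq_iff)
  have "cech_d (\<lambda>S. cech_d c l S) l T = (\<Sum>p\<in>P. f (fst p) (snd p))"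
    unfolding cech_d_def f_def P_def
    by (simp add: sum_distrib_left sum.Sigma case_prod_beta)
  also have "\<dots> = (\<Sum>p\<in>{p\<in>P. fst p < snd p}. f (fst p) (snd p))
                + (\<Sum>p\<in>{p\<in>P. snd p < fst p}. f (fst p) (snd p))"
    by (subst split) (rule sum.union_disjoint, auto)
  also have "(\<Sum>p\<in>{p\<in>P. snd p < fst p}. f (fst p) (snd p))
           = (\<Sum>p\<in>{p\<in>P. fst p < snd p}. f (snd p) (fst p))"
    by (rule sum.reindex_bij_witness[where i=prod.swap and j=prod.swap]) (auto simp: P_def)
  also have "\<dots> = (\<Sum>p\<in>{p\<in>P. fst p < snd p}. - f (fst p) (snd p))"
    using antisym by (intro sum.cong) auto
  finally show ?thesis by (simp add: sum_negf)
qed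

text \<open>Subtracting the coboundary of \<open>b / x^l\<close> from \<open>a / x^k\<close>, written over a common denominator
  and multiplied by \<open>x^m\<close>, does not change the differential.\<close>
lemma cech_d_shift:
  "cech_d (\<lambda>S. xS S ^ (m + l) * a S - xS S ^ (m + k) * cech_d b l S) (k + (m + l)) T
   = xS T ^ (m + l) * cech_d a k T"
proof -
  have "cech_d (\<lambda>S. xS S ^ (m + l) * a S - xS S ^ (m + k) * cech_d b l S) (k + (m + l)) T
      = cech_d (\<lambda>S. xS S ^ (m + l) * a S) (k + (m + l)) T
        - cech_d (\<lambda>S. xS S ^ (m + k) * cech_d b l S) (l + (m + k)) T"
    unfolding cech_d_diff by (simp add: ac_simps)
  also have "\<dots> = xS T ^ (m + l) * cech_d a k T - xS T ^ (m + k) * cech_d (\<lambda>S. cech_d b l S) l T"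
    by (simp only: cech_d_xS_power_mult)
  finally show ?thesis by (simp add: cech_d_cech_d)
qed

definition cech_cochain :: "nat \<Rightarrow> 'a set \<Rightarrow> ('v set \<Rightarrow> 'a) \<Rightarrow> bool" where
  "cech_cochain i N a \<longleftrightarrow> (\<forall>S. card S = i \<longrightarrow> a S \<in> N)"

definition cech_cocycle ::
  "nat \<Rightarrow> ('v::{finite,linorder}, 'k::comm_ring_1) mpoly set \<Rightarrow> ('v set \<Rightarrow> ('v, 'k) mpoly) \<Rightarrow> nat
    \<Rightarrow> bool" where
  "cech_cocycle i N' a k \<longleftrightarrow> (\<forall>T. card T = Suc i \<longrightarrow> loc_zero N' T (cech_d a k T))"

definition cech_coboundary ::
  "nat \<Rightarrow> ('v::{finite,linorder}, 'k::comm_ring_1) mpoly set \<Rightarrow> ('v, 'k) mpoly set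
    \<Rightarrow> ('v set \<Rightarrow> ('v, 'k) mpoly) \<Rightarrow> nat \<Rightarrow> bool" where
  "cech_coboundary i N N' a k \<longleftrightarrow>
     (\<exists>b l. (\<forall>S. card S + 1 = i \<longrightarrow> b S \<in> N) \<and>
            (\<forall>S. card S = i \<longrightarrow> loc_zero N' S (xS S ^ l * a S - xS S ^ k * cech_d b l S)))"

lemma local_cohom_nonzero_iff:
  "local_cohom_nonzero i N N' \<longleftrightarrow>
     (\<exists>a k. cech_cochain i N a \<and> cech_cocycle i N' a k \<and> \<not> cech_coboundary i N N' a k)"
  unfolding local_cohom_nonzero_def cech_cochain_def cech_cocycle_def cech_coboundary_def ..

lemma cech_cocycle_mono: "N1 \<subseteq> N2 \<Longrightarrow> cech_cocycle i N1 a k \<Longrightarrow> cech_cocycle i N2 a k"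
  unfolding cech_cocycle_def using loc_zero_mono by blast

lemma cech_cocycle_shift:
  assumes "is_ideal N'" "cech_cocycle i N' a k"
  shows "cech_cocycle i N' (\<lambda>S. xS S ^ (m + l) * a S - xS S ^ (m + k) * cech_d b l S) (k + (m + l))"
  using assms loc_zero_mult unfolding cech_cocycle_def cech_d_shift by blast

lemma cech_cochain_shift_of_loc_zero:
  fixes a :: "'v::{finite,linorder} set \<Rightarrow> ('v, 'k::comm_ring_1) mpoly"
  assumes "is_ideal B"
    and "\<forall>S. card S = i \<longrightarrow> loc_zero B S (xS S ^ l * a S - xS S ^ k * cech_d b l S)"
  shows "\<exists>m. cech_cochain i B (\<lambda>S. xS S ^ (m + l) * a S - xS S ^ (m + k) * cech_d b l S)"
proof -
  obtain m where "\<forall>S. card S = i \<longrightarrow> xS S ^ m * (xS S ^ l * a S - xS S ^ k * cech_d b l S) \<in> B"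
    using loc_zero_common_exponent[OF assms] by blast
  moreover have "xS S ^ m * (xS S ^ l * a S - xS S ^ k * cech_d b l S)
      = xS S ^ (m + l) * a S - xS S ^ (m + k) * cech_d b l S" for S :: "'v set"
    by (simp add: power_add algebra_simps)
  ultimately show ?thesis
    unfolding cech_cochain_def by auto
qed

lemma cech_coboundary_of_shift:
  assumes A: "is_ideal A" and "B \<subseteq> A" and bA: "\<forall>S. card S + 1 = i \<longrightarrow> b S \<in> A"
    and "cech_coboundary i B C (\<lambda>S. xS S ^ (m + l) * a S - xS S ^ (m + k) * cech_d b l S) (k + (m + l))"
  shows "cech_coboundary i A C a k"
proof -
  obtain c l' where cB: "\<forall>S. card S + 1 = i \<longrightarrow> c S \<in> B"
    and cC: "\<forall>S. card S = i \<longrightarrow> loc_zero C S (xS S ^ l' *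
               (xS S ^ (m + l) * a S - xS S ^ (m + k) * cech_d b l S)
               - xS S ^ (k + (m + l)) * cech_d c l' S)"
    using assms(4) unfolding cech_coboundary_def by blast
  define b' where "b' S = xS S ^ l' * b S + xS S ^ l * c S" for S
  have db': "cech_d b' (l + l') S = xS S ^ l' * cech_d b l S + xS S ^ l * cech_d c l' S" for S
  proof -
    have "cech_d b' (l + l') S
        = cech_d (\<lambda>S. xS S ^ l' * b S) (l + l') S + cech_d (\<lambda>S. xS S ^ l * c S) (l' + l) S"
      unfolding b'_def cech_d_add by (simp add: ac_simps)
    then show ?thesis by (simp only: cech_d_xS_power_mult)
  qed
  have "b' S \<in> A" if "card S + 1 = i" for S
  proof -
    have "b S \<in> A" "c S \<in> A" using that bA cB \<open>B \<subseteq> A\<close> by auto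
    then show ?thesis
      unfolding b'_def by (intro is_ideal_add[OF A] is_ideal_mult_left[OF A])
  qed
  moreover have "loc_zero C S (xS S ^ (l + l') * a S - xS S ^ k * cech_d b' (l + l') S)"
    if "card S = i" for S
  proof -
    have "loc_zero C S (xS S ^ l' * (xS S ^ (m + l) * a S - xS S ^ (m + k) * cech_d b l S)
          - xS S ^ (k + (m + l)) * cech_d c l' S)"
      using cC that by blast
    also have "xS S ^ l' * (xS S ^ (m + l) * a S - xS S ^ (m + k) * cech_d b l S)
          - xS S ^ (k + (m + l)) * cech_d c l' S
        = xS S ^ m * (xS S ^ (l + l') * a S - xS S ^ k * cech_d b' (l + l') S)"
      unfolding db' by (simp add: power_add algebra_simps)
    finally show ?thesis by (rule loc_zero_xS_power_multD)
  qed
  ultimately show ?thesis unfolding cech_coboundary_def by blast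
qed

text \<open>Exactness of \<open>H^j(B/C) \<rightarrow> H^j(A/C) \<rightarrow> H^j(A/B)\<close> at the middle term.\<close>
lemma not_local_cohom_nonzero_quot_trans:
  fixes A B C :: "('v::{finite,linorder}, 'k::comm_ring_1) mpoly set"
  assumes A: "is_ideal A" and B: "is_ideal B" and C: "is_ideal C" and "C \<subseteq> B" "B \<subseteq> A"
    and BC: "\<not> local_cohom_nonzero j B C" and AB: "\<not> local_cohom_nonzero j A B"
  shows "\<not> local_cohom_nonzero j A C"
proof
  assume "local_cohom_nonzero j A C"
  then obtain a k where aA: "cech_cochain j A a" and aC: "cech_cocycle j C a k"
    and not_cob: "\<not> cech_coboundary j A C a k"
    unfolding local_cohom_nonzero_iff by blast
  have "cech_coboundary j A B a k"
    using AB aA cech_cocycle_mono[OF \<open>C \<subseteq> B\<close> aC] unfolding local_cohom_nonzero_iff by blast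
  then obtain b l where bA: "\<forall>S. card S + 1 = j \<longrightarrow> b S \<in> A"
    and bB: "\<forall>S. card S = j \<longrightarrow> loc_zero B S (xS S ^ l * a S - xS S ^ k * cech_d b l S)"
    unfolding cech_coboundary_def by blast
  define a' where "a' m S = xS S ^ (m + l) * a S - xS S ^ (m + k) * cech_d b l S" for m S
  obtain m where "cech_cochain j B (a' m)"
    using cech_cochain_shift_of_loc_zero[OF B bB] unfolding a'_def by blast
  moreover have "cech_cocycle j C (a' m) (k + (m + l))"
    unfolding a'_def using cech_cocycle_shift[OF C aC] .
  ultimately have "cech_coboundary j B C (a' m) (k + (m + l))"
    using BC unfolding local_cohom_nonzero_iff by blast
  then have "cech_coboundary j A C a k"
    using cech_coboundary_of_shift[OF A \<open>B \<subseteq> A\<close> bA] unfolding a'_def by blast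
  with not_cob show False ..
qed

text \<open>Exactness of \<open>H^j(A/B) \<rightarrow> H^(j+1)(B/C) \<rightarrow> H^(j+1)(A/C)\<close> at the middle term.\<close>
lemma not_local_cohom_nonzero_Suc_sub:
  fixes A B C :: "('v::{finite,linorder}, 'k::comm_ring_1) mpoly set"
  assumes B: "is_ideal B" and C: "is_ideal C" and "C \<subseteq> B" "B \<subseteq> A"
    and AC: "\<not> local_cohom_nonzero (Suc j) A C" and AB: "\<not> local_cohom_nonzero j A B"
  shows "\<not> local_cohom_nonzero (Suc j) B C"
proof
  assume "local_cohom_nonzero (Suc j) B C"
  then obtain a k where aB: "cech_cochain (Suc j) B a" and aC: "cech_cocycle (Suc j) C a k"
    and not_cob: "\<not> cech_coboundary (Suc j) B C a k"
    unfolding local_cohom_nonzero_iff by blast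
  have "cech_cochain (Suc j) A a"
    using aB \<open>B \<subseteq> A\<close> unfolding cech_cochain_def by blast
  then have "cech_coboundary (Suc j) A C a k"
    using AC aC unfolding local_cohom_nonzero_iff by blast
  then obtain b l where bA: "cech_cochain j A b"
    and bC: "\<forall>S. card S = Suc j \<longrightarrow> loc_zero C S (xS S ^ l * a S - xS S ^ k * cech_d b l S)"
    unfolding cech_coboundary_def cech_cochain_def by auto
  have "cech_cocycle j B b l"
    unfolding cech_cocycle_def
  proof (intro allI impI)
    fix T :: "'v set" assume T: "card T = Suc j"
    then obtain s where s: "xS T ^ s * (xS T ^ l * a T - xS T ^ k * cech_d b l T) \<in> B"
      using bC \<open>C \<subseteq> B\<close> unfolding loc_zero_def by blast
    have "xS T ^ (s + l) * a T \<in> B"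
      using aB T is_ideal_mult_left[OF B] unfolding cech_cochain_def by blast
    then have "xS T ^ (s + l) * a T - xS T ^ s * (xS T ^ l * a T - xS T ^ k * cech_d b l T) \<in> B"
      using s is_ideal_diff[OF B] by blast
    then have "xS T ^ (s + k) * cech_d b l T \<in> B"
      by (simp add: power_add algebra_simps)
    then show "loc_zero B T (cech_d b l T)"
      unfolding loc_zero_def by blast
  qed
  then have "cech_coboundary j A B b l"
    using AB bA unfolding local_cohom_nonzero_iff by blast
  then obtain c l' where
    "\<forall>S. card S = j \<longrightarrow> loc_zero B S (xS S ^ l' * b S - xS S ^ l * cech_d c l' S)"
    unfolding cech_coboundary_def by blast
  then obtain m where
    b'B: "cech_cochain j B (\<lambda>S. xS S ^ (m + l') * b S - xS S ^ (m + l) * cech_d c l' S)"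
    using cech_cochain_shift_of_loc_zero[OF B] by blast
  have "loc_zero C S (xS S ^ (l + (m + l')) * a S - xS S ^ k *
          cech_d (\<lambda>S. xS S ^ (m + l') * b S - xS S ^ (m + l) * cech_d c l' S) (l + (m + l')) S)"
    if "card S = Suc j" for S
  proof -
    have "xS S ^ (l + (m + l')) * a S - xS S ^ k *
            cech_d (\<lambda>S. xS S ^ (m + l') * b S - xS S ^ (m + l) * cech_d c l' S) (l + (m + l')) S
        = xS S ^ (m + l') * (xS S ^ l * a S - xS S ^ k * cech_d b l S)"
      unfolding cech_d_shift by (simp add: power_add algebra_simps)
    then show ?thesis
      using bC that loc_zero_mult[OF C] by metis
  qed
  with b'B have "cech_coboundary (Suc j) B C a k"
    unfolding cech_coboundary_def cech_cochain_def by fastforce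
  with not_cob show False ..
qed

lemma not_local_cohom_nonzero_0_sub:
  "B \<subseteq> A \<Longrightarrow> \<not> local_cohom_nonzero 0 A C \<Longrightarrow> \<not> local_cohom_nonzero 0 B C"
  unfolding local_cohom_nonzero_def by (metis add_is_0 one_neq_zero subsetD)

lemma le_depth_quotI:
  assumes "\<And>j. enat j < d \<Longrightarrow> \<not> local_cohom_nonzero j N N'"
  shows "d \<le> depth_quot N N'"
proof (cases "\<exists>i. local_cohom_nonzero i N N'")
  case True
  then have "local_cohom_nonzero (LEAST i. local_cohom_nonzero i N N') N N'"
    by (rule LeastI_ex)
  then have "\<not> enat (LEAST i. local_cohom_nonzero i N N') < d"
    using assms by blast
  then show ?thesis using True unfolding depth_quot_def by (simp add: not_less)
qed (simp add: depth_quot_def)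

lemma not_local_cohom_nonzero_less_depth_quot:
  assumes "enat j < depth_quot N N'"
  shows "\<not> local_cohom_nonzero j N N'"
proof
  assume j: "local_cohom_nonzero j N N'"
  then have "depth_quot N N' = enat (LEAST i. local_cohom_nonzero i N N')"
    unfolding depth_quot_def by auto
  moreover have "(LEAST i. local_cohom_nonzero i N N') \<le> j"
    using j by (rule Least_le)
  ultimately show False using assms by simp
qed

lemma depth_quot_UNIV_UNIV: "depth_quot UNIV UNIV = \<infinity>"
proof -
  have "\<not> local_cohom_nonzero j UNIV UNIV" for j
    unfolding local_cohom_nonzero_def loc_zero_def by blast
  then show ?thesis unfolding depth_quot_def by auto
qed

lemma depth_quot_quot_trans:
  fixes A B C :: "('v::{finite,linorder}, 'k::comm_ring_1) mpoly set"
  assumes "is_ideal A" "is_ideal B" "is_ideal C" "C \<subseteq> B" "B \<subseteq> A"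
  shows "min (depth_quot B C) (depth_quot A B) \<le> depth_quot A C"
proof (rule le_depth_quotI)
  fix j assume "enat j < min (depth_quot B C) (depth_quot A B)"
  then have "\<not> local_cohom_nonzero j B C" "\<not> local_cohom_nonzero j A B"
    by (simp_all add: not_local_cohom_nonzero_less_depth_quot)
  then show "\<not> local_cohom_nonzero j A C"
    by (rule not_local_cohom_nonzero_quot_trans[OF assms])
qed

lemma depth_quot_sub:
  fixes A B C :: "('v::{finite,linorder}, 'k::comm_ring_1) mpoly set"
  assumes "is_ideal B" "is_ideal C" "C \<subseteq> B" "B \<subseteq> A"
  shows "min (depth_quot A C) (eSuc (depth_quot A B)) \<le> depth_quot B C"
proof (rule le_depth_quotI)
  fix j assume j: "enat j < min (depth_quot A C) (eSuc (depth_quot A B))"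
  then have AC: "\<not> local_cohom_nonzero j A C"
    by (simp add: not_local_cohom_nonzero_less_depth_quot)
  show "\<not> local_cohom_nonzero j B C"
  proof (cases j)
    case 0
    then show ?thesis using AC not_local_cohom_nonzero_0_sub[OF \<open>B \<subseteq> A\<close>] by simp
  next
    case (Suc j')
    then have "\<not> local_cohom_nonzero j' A B"
      using j by (simp add: eSuc_enat[symmetric] not_local_cohom_nonzero_less_depth_quot)
    then show ?thesis
      using not_local_cohom_nonzero_Suc_sub[OF assms] AC Suc by simp
  qed
qed

lemma INF_atLeast_1_eq_of_interleaved:
  fixes M K :: "nat \<Rightarrow> 'a::complete_linorder"
  assumes "M 0 = top"
    and M_ge: "\<And>n. min (K (Suc n)) (M n) \<le> M (Suc n)"
    and K_ge: "\<And>n. min (M (Suc n)) (M n) \<le> K (Suc n)"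
  shows "(INF i\<in>{1..}. M i) = (INF i\<in>{1..}. K i)"
proof -
  have K_lower: "(INF i\<in>{1..}. K i) \<le> M n" for n
  proof (induction n)
    case 0 then show ?case using assms(1) by simp
  next
    case (Suc n)
    have "(INF i\<in>{1..}. K i) \<le> K (Suc n)" by (rule INF_lower) simp
    then show ?case using Suc M_ge[of n] by (meson min.boundedI order.trans)
  qed
  have M_lower: "(INF i\<in>{1..}. M i) \<le> M n" for n
    using assms(1) by (cases n) (auto intro: INF_lower)
  have "(INF i\<in>{1..}. M i) \<le> K i" if i: "i \<in> {1..}" for i
  proof -
    obtain n where "i = Suc n" using i by (cases i) auto
    then show ?thesis
      using M_lower[of n] M_lower[of "Suc n"] K_ge[of n] by (meson min.boundedI order.trans)
  qed
  then show ?thesis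
    using K_lower by (intro order.antisym INF_greatest) auto
qed

theorem lemma4p4:
  fixes I :: "('v::{finite,linorder}, 'k::field) mpoly set"
  assumes "homogeneous_ideal I" and "I \<noteq> {0}" and "I \<noteq> UNIV"
  shows "(INF i\<in>{1..}. depth_quot UNIV (ideal_pow I i))
       = (INF i\<in>{1..}. depth_quot (ideal_pow I (i - 1)) (ideal_pow I i))"
proof (rule INF_atLeast_1_eq_of_interleaved)
  have UNIV: "is_ideal (UNIV :: ('v, 'k) mpoly set)"
    by (simp add: is_ideal_def)
  show "depth_quot UNIV (ideal_pow I 0) = top"
    by (simp add: depth_quot_UNIV_UNIV top_enat_def)
  show "min (depth_quot (ideal_pow I (Suc n - 1)) (ideal_pow I (Suc n))) (depth_quot UNIV (ideal_pow I n))
        \<le> depth_quot UNIV (ideal_pow I (Suc n))" for n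
    using depth_quot_quot_trans[OF UNIV is_ideal_ideal_pow is_ideal_ideal_pow ideal_pow_Suc_subset]
    by simp
  show "min (depth_quot UNIV (ideal_pow I (Suc n))) (depth_quot UNIV (ideal_pow I n))
        \<le> depth_quot (ideal_pow I (Suc n - 1)) (ideal_pow I (Suc n))" for n
  proof -
    have "min (depth_quot UNIV (ideal_pow I (Suc n))) (depth_quot UNIV (ideal_pow I n))
        \<le> min (depth_quot UNIV (ideal_pow I (Suc n))) (eSuc (depth_quot UNIV (ideal_pow I n)))"
      by (intro min.mono) simp_all
    also have "\<dots> \<le> depth_quot (ideal_pow I n) (ideal_pow I (Suc n))"
      by (rule depth_quot_sub[OF is_ideal_ideal_pow is_ideal_ideal_pow ideal_pow_Suc_subset]) simp
    finally show ?thesis by simp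
  qed
qed

end
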